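(* Let $\mathcal{G}=(\mathcal{N},\mathcal{E})$ be a connected meshed graph (containing at least one cycle) with $N$ nodes and $E$ edges, and let $A\in\mathbb{R}^{E\times N}$ be its edge-node incidence matrix. Let $f\in\mathbb{R}^E$. Then there exist $x\in\mathbb{R}^E$ with $x>\mathbf{0}$ (entrywise) and $\theta\in\mathbb{R}^N$ such that $$\operatorname{diag}(f)\,x=A\theta$$ if and only if for every $n\in\operatorname{null}(A^\top)$ one of the following holds: (1) $f\odot n=\mathbf{0}$; or (2) there exist indices $i,j$ such that $(f\odot n)_i>0$ and $(f\odot n)_j<0$.
   Context: Incidence matrix: after assigning an arbitrary direction $e=(m,n)$ to each edge, $A_{e,k}=+1$ if $k=m$, $A_{e,k}=-1$ if $k=n$, and $A_{e,k}=0$ otherwise. $\odot$ denotes the entrywise product of vectors, and $\operatorname{diag}(v)$ the diagonal matrix with diagonal $v$. $\operatorname{null}(A^\top)=\{n\in\mathbb{R}^E: A^\top n=\mathbf{0}\}$. *)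

theory Defs
  imports "HOL-Analysis.Analysis"
begin

text \<open>A finite directed graph with node type 'n and edge type 'e; every edge e is
  oriented from src e to tgt e (the arbitrary orientation used for the incidence matrix).\<close>

definition adjacent :: "('e \<Rightarrow> 'n) \<Rightarrow> ('e \<Rightarrow> 'n) \<Rightarrow> 'n \<Rightarrow> 'n \<Rightarrow> bool" where
  "adjacent src tgt u v \<longleftrightarrow> (\<exists>e. (src e = u \<and> tgt e = v) \<or> (src e = v \<and> tgt e = u))"

definition simple_graph :: "('e \<Rightarrow> 'n) \<Rightarrow> ('e \<Rightarrow> 'n) \<Rightarrow> bool" where
  "simple_graph src tgt \<longleftrightarrow> (\<forall>e. src e \<noteq> tgt e) \<and>
     (\<forall>e e'. {src e, tgt e} = {src e', tgt e'} \<longrightarrow> e = e')"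

definition connected_graph :: "('e \<Rightarrow> 'n) \<Rightarrow> ('e \<Rightarrow> 'n) \<Rightarrow> bool" where
  "connected_graph src tgt \<longleftrightarrow> (\<forall>u v. (adjacent src tgt)\<^sup>*\<^sup>* u v)"

definition has_cycle :: "('e \<Rightarrow> 'n) \<Rightarrow> ('e \<Rightarrow> 'n) \<Rightarrow> bool" where
  "has_cycle src tgt \<longleftrightarrow> (\<exists>vs. length vs \<ge> 3 \<and> distinct vs \<and>
     (\<forall>i < length vs. adjacent src tgt (vs ! i) (vs ! ((i + 1) mod length vs))))"

definition incidence_matrix :: "('e::finite \<Rightarrow> 'n::finite) \<Rightarrow> ('e \<Rightarrow> 'n) \<Rightarrow> real^'n^'e" where
  "incidence_matrix src tgt = (\<chi> e k. if k = src e then 1 else if k = tgt e then -1 else 0)"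

definition diag_mat :: "real^'e \<Rightarrow> real^'e^'e" where
  "diag_mat v = (\<chi> i j. if i = j then v $ i else 0)"

end

theory Submission
  imports Defs
begin

text \<open>With \<open>diag(f) x = f \<odot> x\<close>, the left-hand side asks for a positive \<open>x\<close> with
  \<open>f \<odot> x \<in> range A = null(A\<^sup>T)\<^sup>\<bottom>\<close>, i.e. a positive vector orthogonal to the subspace
  \<open>M = {f \<odot> n | n \<in> null(A\<^sup>T)}\<close>. By Stiemke's theorem such a vector exists iff \<open>M\<close> meets the
  nonnegative orthant only in \<open>0\<close>, which is the right-hand side. For Stiemke's theorem, separate \<open>M\<close> strictly from the standard simplex: the
  separating functional is bounded below on \<open>M\<close>, hence orthogonal to it, and its negative is
  positive on every vertex of the simplex.\<close>

lemma diag_mat_mult_vec: "diag_mat f *v x = f * x"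
  by (simp add: diag_mat_def matrix_vector_mult_def vec_eq_iff mult_delta_left)

lemma range_matrix_vector_mult_eq_orthogonal_comp:
  fixes A :: "real^'n::finite^'m::finite"
  shows "range (\<lambda>\<theta>. A *v \<theta>) = {n. transpose A *v n = 0}\<^sup>\<bottom>"
proof -
  have "adjoint (\<lambda>n. transpose A *v n) = (\<lambda>\<theta>. A *v \<theta>)"
    using adjoint_matrix[of "transpose A"] by (simp only: transpose_transpose)
  then have "{n. transpose A *v n = 0} = (range (\<lambda>\<theta>. A *v \<theta>))\<^sup>\<bottom>"
    using ker_orthogonal_comp_adjoint[OF matrix_vector_mul_linear, of "transpose A"]
    by (simp only: vimage_def singleton_iff)
  then show ?thesis
    by (simp add: orthogonal_comp_self linear_subspace_image)
qed

lemma orthogonal_comp_mult_image_iff: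
  fixes f x :: "real^'e::finite"
  shows "x \<in> ((\<lambda>n. f * n) ` U)\<^sup>\<bottom> \<longleftrightarrow> f * x \<in> U\<^sup>\<bottom>"
proof -
  have "(f * n) \<bullet> x = n \<bullet> (f * x)" for n
    by (simp add: inner_vec_def mult_ac)
  then show ?thesis
    by (simp add: orthogonal_comp_def orthogonal_def)
qed

lemma nonneg_orthogonal_positive_eq_0:
  fixes w x :: "real^'e::finite"
  assumes "\<forall>i. 0 \<le> w $ i" and "\<forall>i. 0 < x $ i" and "w \<bullet> x = 0"
  shows "w = 0"
proof -
  have "(\<Sum>i\<in>UNIV. w $ i * x $ i) = 0"
    using assms(3) by (simp add: inner_vec_def)
  then have "\<forall>i. w $ i * x $ i = 0"
    using assms(1,2) by (simp add: sum_nonneg_eq_0_iff less_imp_le)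
  then show ?thesis
    using assms(2) by (simp add: vec_eq_iff) (metis less_irrefl)
qed

lemma orthogonal_positive_imp_mixed_signs:
  fixes w x :: "real^'e::finite"
  assumes "\<forall>i. 0 < x $ i" and "w \<bullet> x = 0"
  shows "w = 0 \<or> (\<exists>i j. w $ i > 0 \<and> w $ j < 0)"
proof (rule ccontr)
  assume "\<not> ?thesis"
  then have "w \<noteq> 0" and sign: "(\<forall>i. 0 \<le> w $ i) \<or> (\<forall>i. 0 \<le> (- w) $ i)"
    by (auto simp: not_less)
  have "(- w) \<bullet> x = 0"
    using assms(2) by simp
  with sign assms have "w = 0 \<or> - w = 0"
    using nonneg_orthogonal_positive_eq_0 by blast
  with \<open>w \<noteq> 0\<close> show False
    by simp
qed

lemma orthogonal_comp_if_inner_bounded_below: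
  assumes "subspace M" and "\<forall>m\<in>M. b < a \<bullet> m"
  shows "a \<in> M\<^sup>\<bottom>"
  unfolding orthogonal_comp_def orthogonal_def
proof (rule CollectI, rule ballI, rule ccontr)
  fix m assume "m \<in> M" and "m \<bullet> a \<noteq> 0"
  then have "a \<bullet> m \<noteq> 0"
    by (simp add: inner_commute)
  have "((b - 1) / (a \<bullet> m)) *\<^sub>R m \<in> M"
    using assms(1) \<open>m \<in> M\<close> by (rule subspace_scale)
  then have "b < a \<bullet> (((b - 1) / (a \<bullet> m)) *\<^sub>R m)"
    using assms(2) by blast
  also have "\<dots> = b - 1"
    using \<open>a \<bullet> m \<noteq> 0\<close> by simp
  finally show False
    by simp
qed

lemma orthogonal_comp_has_positive_vector:
  fixes M :: "(real^'e::finite) set"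
  assumes M: "subspace M" and orthant: "\<And>m. m \<in> M \<Longrightarrow> \<forall>i. 0 \<le> m $ i \<Longrightarrow> m = 0"
  shows "\<exists>x\<in>M\<^sup>\<bottom>. \<forall>i. 0 < x $ i"
proof -
  define D where "D = convex hull (range (\<lambda>i::'e. axis i (1::real)))"
  have vertices: "range (\<lambda>i. axis i 1) \<subseteq> {x. \<forall>i. 0 \<le> x $ i} \<inter> {x::real^'e. 1 \<bullet> x = 1}"
    by (auto simp: inner_axis) (simp add: axis_def)
  have "convex ({x::real^'e. \<forall>i. 0 \<le> x $ i} \<inter> {x. 1 \<bullet> x = 1})"
    by (intro convex_Int convex_box_cart convex_hyperplane) (simp add: atLeast_def[symmetric])
  with vertices have "D \<subseteq> {x. \<forall>i. 0 \<le> x $ i} \<inter> {x. 1 \<bullet> x = 1}"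
    unfolding D_def by (rule hull_minimal)
  then have "D \<inter> M = {}"
    using orthant by fastforce
  moreover have "compact D" and "convex D" and "D \<noteq> {}"
    by (simp_all add: D_def compact_convex_hull finite_imp_compact)
  ultimately obtain a b where aD: "\<forall>x\<in>D. a \<bullet> x < b" and aM: "\<forall>x\<in>M. b < a \<bullet> x"
    using separating_hyperplane_compact_closed M subspace_imp_convex closed_subspace
    by metis
  have "b < 0"
    using aM subspace_0[OF M] by fastforce
  moreover have "a \<bullet> axis i 1 < b" for i
    using aD by (simp add: D_def hull_inc)
  ultimately have "\<forall>i. 0 < (- a) $ i"
    by (simp add: inner_axis) (meson less_trans)
  moreover have "- a \<in> M\<^sup>\<bottom>"
    using orthogonal_comp_if_inner_bounded_below[OF M aM]
    by (simp add: subspace_neg subspace_orthogonal_comp)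
  ultimately show ?thesis
    by blast
qed

theorem stiemke:
  fixes M :: "(real^'e::finite) set"
  assumes "subspace M"
  shows "(\<exists>x\<in>M\<^sup>\<bottom>. \<forall>i. 0 < x $ i) \<longleftrightarrow> (\<forall>m\<in>M. m = 0 \<or> (\<exists>i j. m $ i > 0 \<and> m $ j < 0))"
proof
  assume "\<exists>x\<in>M\<^sup>\<bottom>. \<forall>i. 0 < x $ i"
  then show "\<forall>m\<in>M. m = 0 \<or> (\<exists>i j. m $ i > 0 \<and> m $ j < 0)"
    using orthogonal_positive_imp_mixed_signs
    by (auto simp: orthogonal_comp_def orthogonal_def)
next
  assume "\<forall>m\<in>M. m = 0 \<or> (\<exists>i j. m $ i > 0 \<and> m $ j < 0)"
  then show "\<exists>x\<in>M\<^sup>\<bottom>. \<forall>i. 0 < x $ i"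
    using orthogonal_comp_has_positive_vector[OF assms] by (meson not_le)
qed

theorem proposition3:
  fixes src tgt :: "'e::finite \<Rightarrow> 'n::finite" and f :: "real^'e"
  assumes "simple_graph src tgt"
    and "connected_graph src tgt"
    and "has_cycle src tgt"
  defines "A \<equiv> incidence_matrix src tgt"
  shows "(\<exists>x::real^'e. (\<forall>e. x $ e > 0) \<and> (\<exists>\<theta>::real^'n. diag_mat f *v x = A *v \<theta>))
     \<longleftrightarrow> (\<forall>n::real^'e. transpose A *v n = 0 \<longrightarrow>
            (f * n = 0 \<or> (\<exists>i j. (f * n) $ i > 0 \<and> (f * n) $ j < 0)))"
proof -
  define N where "N = {n::real^'e. transpose A *v n = 0}"
  have "subspace N"
    unfolding N_def by (rule linear_subspace_kernel[OF matrix_vector_mul_linear])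
  then have M: "subspace ((\<lambda>n. f * n) ` N)"
    by (rule linear_subspace_image[rotated]) (simp add: linearI vec_eq_iff algebra_simps)
  have "(\<exists>\<theta>. diag_mat f *v x = A *v \<theta>) \<longleftrightarrow> x \<in> ((\<lambda>n. f * n) ` N)\<^sup>\<bottom>" for x
    using range_matrix_vector_mult_eq_orthogonal_comp[of A]
    by (auto simp: diag_mat_mult_vec orthogonal_comp_mult_image_iff N_def)
  then show ?thesis
    using stiemke[OF M] by (auto simp: N_def)
qed

end
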